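(* Let $q\ge 4$. If a hyperplane $H$ of $\mathrm{PG}(U_1)$ contains a twisted cubic of $\mathcal O_1$ (i.e. contains $\theta(L)$ for some $q$-order subline $L$ of $\mathrm{PG}(1,q^3)$), then $|H\cap\mathcal O_1|\in\{q^2+1,\;q^2+q+1\}$.
   Context: $q$ is a prime power. Let $U_1\subset\mathbb F_{q^3}^8$ be the set of vectors $(a,b^{q^2},b^{q},c,b,c^{q},c^{q^2},d)$ with $a,d\in\mathbb F_q$, $b,c\in\mathbb F_{q^3}$; it is an $8$-dimensional $\mathbb F_q$-vector space, so $\mathrm{PG}(U_1)\cong\mathrm{PG}(7,q)$. For $(a,b,c,d)\ne 0$ let $P(a,b,c,d)$ be the point of $\mathrm{PG}(U_1)$ spanned by this vector. Let $\mathcal O_1=\{P(1,t,t^{q^2+q},t^{q^2+q+1}) : t\in\mathbb F_{q^3}\}\cup\{P(0,0,0,1)\}$. Let $\theta:\mathrm{PG}(1,q^3)\to\mathcal O_1$ be the bijection $\langle(1,t)\rangle\mapsto P(1,t,t^{q^2+q},t^{q^2+q+1})$, $\langle(0,1)\rangle\mapsto P(0,0,0,1)$. A $q$-order subline of $\mathrm{PG}(1,q^3)$ is the image of $\mathrm{PG}(1,q)=\{\langle(1,t)\rangle:t\in\mathbb F_q\}\cup\{\langle(0,1)\rangle\}$ under an element of $\mathrm{PGL}(2,q^3)$; the sets $\theta(L)$ are twisted cubics, called the twisted cubics of $\mathcal O_1$. *)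

theory Defs
  imports "HOL-Computational_Algebra.Primes"
begin

text \<open>The ambient field is a finite field 'a of order q^3 (F_{q^3}); F_q is its subfield
  {x. x^q = x}. Vectors of F_{q^3}^8 are functions nat => 'a supported on {0..<8}.\<close>

definition Fq :: "nat \<Rightarrow> 'a::{field,finite} set" where
  "Fq q = {x. x ^ q = x}"

definition vec8 :: "'a::zero list \<Rightarrow> nat \<Rightarrow> 'a" where
  "vec8 xs i = (if i < length xs then xs ! i else 0)"

definition U1vec :: "nat \<Rightarrow> 'a::{field,finite} \<Rightarrow> 'a \<Rightarrow> 'a \<Rightarrow> 'a \<Rightarrow> nat \<Rightarrow> 'a" where
  "U1vec q a b c d = vec8 [a, b ^ (q^2), b ^ q, c, b, c ^ q, c ^ (q^2), d]"

definition U1 :: "nat \<Rightarrow> (nat \<Rightarrow> 'a::{field,finite}) set" where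
  "U1 q = {U1vec q a b c d | a b c d. a \<in> Fq q \<and> d \<in> Fq q}"

definition fq_subspace :: "nat \<Rightarrow> (nat \<Rightarrow> 'a::{field,finite}) set \<Rightarrow> bool" where
  "fq_subspace q S \<longleftrightarrow> (\<lambda>i. 0) \<in> S \<and> (\<forall>x\<in>S. \<forall>y\<in>S. (\<lambda>i. x i + y i) \<in> S)
     \<and> (\<forall>l\<in>Fq q. \<forall>x\<in>S. (\<lambda>i. l * x i) \<in> S)"

definition hyperplane :: "nat \<Rightarrow> (nat \<Rightarrow> 'a::{field,finite}) set \<Rightarrow> bool" where
  "hyperplane q H \<longleftrightarrow> fq_subspace q H \<and> H \<subseteq> U1 q \<and> H \<noteq> U1 q \<and>
     (\<forall>v\<in>U1 q - H. \<forall>u\<in>U1 q. \<exists>h\<in>H. \<exists>l\<in>Fq q. u = (\<lambda>i. h i + l * v i))"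

definition pt :: "nat \<Rightarrow> (nat \<Rightarrow> 'a::{field,finite}) \<Rightarrow> (nat \<Rightarrow> 'a) set" where
  "pt q v = {(\<lambda>i. l * v i) | l. l \<in> Fq q}"

text \<open>Points of PG(1,q^3): Some t = <(1,t)>, None = <(0,1)>.\<close>
definition theta :: "nat \<Rightarrow> 'a::{field,finite} option \<Rightarrow> (nat \<Rightarrow> 'a) set" where
  "theta q x = (case x of
      Some t \<Rightarrow> pt q (U1vec q 1 t (t ^ (q^2 + q)) (t ^ (q^2 + q + 1)))
    | None \<Rightarrow> pt q (U1vec q 0 0 0 1))"

definition O1 :: "nat \<Rightarrow> (nat \<Rightarrow> 'a::{field,finite}) set set" where
  "O1 q = range (theta q)"

text \<open>Action of the matrix [[al,be],[ga,de]] on PG(1,q^3): <(x,y)> maps to <(al x + be y, ga x + de y)>.\<close>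
definition mob :: "'a::field \<Rightarrow> 'a \<Rightarrow> 'a \<Rightarrow> 'a \<Rightarrow> 'a option \<Rightarrow> 'a option" where
  "mob al be ga de x = (case x of
      Some t \<Rightarrow> (if al + be * t = 0 then None else Some ((ga + de * t) / (al + be * t)))
    | None \<Rightarrow> (if be = 0 then None else Some (de / be)))"

definition PG1q :: "nat \<Rightarrow> 'a::{field,finite} option set" where
  "PG1q q = Some ` Fq q \<union> {None}"

definition subline :: "nat \<Rightarrow> 'a::{field,finite} option set \<Rightarrow> bool" where
  "subline q L \<longleftrightarrow> (\<exists>al be ga de. al * de - be * ga \<noteq> 0 \<and> L = mob al be ga de ` PG1q q)"

end

theory Submission
  imports Defs "HOL-Number_Theory.Residues" "HOL-Computational_Algebra.Polynomial"
begin

text \<open>Write the points of PG(1,q^3) as \<open>\<langle>(x,y)\<rangle>\<close>. Then \<open>\<theta>\<langle>(x,y)\<rangle>\<close> is spanned by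
  \<open>(x,y) \<otimes> (x,y)\<^sup>q \<otimes> (x,y)\<^sup>q\<^sup>2 \<in> U\<^sub>1\<close>, and \<open>A \<in> GL(2,q^3)\<close> acts on \<open>U\<^sub>1\<close> by
  \<open>A \<otimes> A\<^sup>q \<otimes> A\<^sup>q\<^sup>2\<close> compatibly with \<open>\<theta>\<close>, so we may assume that the subline is PG(1,q).
  The hyperplane is the kernel of a nonzero \<open>F\<^sub>q\<close>-linear form on \<open>U\<^sub>1\<close>, whose value at
  \<open>\<theta>\<langle>(1,t)\<rangle>\<close> is \<open>a + B(t) + C(t\<^sup>q\<^sup>+\<^sup>q\<^sup>2) + d N(t)\<close> for \<open>F\<^sub>q\<close>-linear forms \<open>B, C\<close> on
  \<open>F\<^sub>q\<^sub>3\<close>. Vanishing on \<open>\<theta>(PG(1,q))\<close> forces \<open>a = d = B(1) = C(1) = 0\<close> (this needs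
  \<open>q \<ge> 3\<close>). If \<open>C = 0\<close>, the zeros are the \<open>q\<^sup>2\<close> elements of \<open>ker B\<close>. Otherwise translating
  \<open>t\<close> by \<open>c \<in> F\<^sub>q\<close> changes the value by \<open>-c C(t)\<close>, so every \<open>F\<^sub>q\<close>-coset outside \<open>ker C\<close>
  contains exactly one zero, while on \<open>ker C = F\<^sub>q + F\<^sub>q u\<close> the value is
  \<open>l (B(u) + l C(u\<^sup>q\<^sup>+\<^sup>q\<^sup>2))\<close> with \<open>C(u\<^sup>q\<^sup>+\<^sup>q\<^sup>2) \<noteq> 0\<close>, which has \<open>q\<close> or \<open>2q\<close> zeros.
  With the point \<open>\<langle>(0,1)\<rangle>\<close> this gives \<open>q\<^sup>2 + 1\<close> or \<open>q\<^sup>2 + q + 1\<close> points.\<close>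

text \<open>The library version \<open>finite_field_power_card_eq_same\<close> needs the sort \<open>finite_field\<close>.\<close>
lemma power_card_UNIV_eq_self:
  fixes x :: "'a::{field,finite}"
  shows "x ^ card (UNIV :: 'a set) = x"
proof (cases "x = 0")
  case False
  define G :: "'a monoid" where "G = \<lparr>carrier = UNIV - {0}, mult = (*), one = 1\<rparr>"
  have "group G"
  proof (rule groupI)
    show "\<exists>y\<in>carrier G. y \<otimes>\<^bsub>G\<^esub> z = \<one>\<^bsub>G\<^esub>" if "z \<in> carrier G" for z
      using that by (intro bexI[of _ "inverse z"]) (auto simp: G_def)
  qed (auto simp: G_def mult.assoc)
  moreover have "x \<in> carrier G"
    using False by (simp add: G_def)
  ultimately have "x [^]\<^bsub>G\<^esub> Coset.order G = 1"
    by (simp add: group.pow_order_eq_1) (simp add: G_def)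
  moreover have "x [^]\<^bsub>G\<^esub> n = x ^ n" for n :: nat
    by (induction n) (simp_all add: G_def mult.commute)
  moreover have "Coset.order G = card (UNIV :: 'a set) - 1"
    by (simp add: Coset.order_def G_def card_Diff_singleton)
  ultimately have "x ^ (card (UNIV :: 'a set) - 1) = 1"
    by simp
  then show ?thesis
    by (metis finite_UNIV_card_ge_0 finite power_minus_mult mult_1)
qed (simp add: finite_UNIV_card_ge_0)

lemma card_roots_monic_le:
  fixes c :: "nat \<Rightarrow> 'a::idom"
  assumes "finite K" and "\<forall>k\<in>K. k < n"
  shows "card {x. x ^ n + (\<Sum>k\<in>K. c k * x ^ k) = 0} \<le> n"
proof -
  define p where "p = monom 1 n + (\<Sum>k\<in>K. monom (c k) k)"
  have "coeff p n = 1"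
    using assms by (auto simp: p_def coeff_sum)
  then have "p \<noteq> 0"
    by auto
  have "degree (monom (c k) k) \<le> n" if "k \<in> K" for k
    using degree_monom_le[of "c k" k] assms(2) that by fastforce
  then have "degree p \<le> n"
    unfolding p_def using assms(1) by (auto intro!: degree_add_le degree_sum_le degree_monom_le)
  moreover have "{x. x ^ n + (\<Sum>k\<in>K. c k * x ^ k) = 0} = {x. poly p x = 0}"
    by (simp add: p_def poly_sum poly_monom)
  ultimately show ?thesis
    using card_poly_roots_bound[OF \<open>p \<noteq> 0\<close>] by simp
qed

definition proj_coords :: "'a::field option \<Rightarrow> 'a \<times> 'a" where
  "proj_coords x = (case x of Some t \<Rightarrow> (1, t) | None \<Rightarrow> (0, 1))"

lemma matrix2_kernel_trivial:
  fixes al be ga de :: "'a::field"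
  assumes "al * x + be * y = 0" "ga * x + de * y = 0" "al * de - be * ga \<noteq> 0"
  shows "x = 0 \<and> y = 0"
proof -
  have "(al * de - be * ga) * x = de * (al * x + be * y) - be * (ga * x + de * y)"
    "(al * de - be * ga) * y = al * (ga * x + de * y) - ga * (al * x + be * y)"
    by (simp_all add: algebra_simps)
  then show ?thesis
    using assms by simp
qed

lemma mob_proj_coords:
  fixes al be ga de :: "'a::field"
  assumes det: "al * de - be * ga \<noteq> 0"
  obtains \<mu> where "\<mu> \<noteq> 0"
    "al * fst (proj_coords x) + be * snd (proj_coords x) = \<mu> * fst (proj_coords (mob al be ga de x))"
    "ga * fst (proj_coords x) + de * snd (proj_coords x) = \<mu> * snd (proj_coords (mob al be ga de x))"
proof (cases x)
  case None
  show ?thesis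
  proof (cases "be = 0")
    case True
    then show ?thesis
      using that[of de] None det by (simp add: mob_def proj_coords_def)
  next
    case False
    then show ?thesis
      using that[of be] None by (simp add: mob_def proj_coords_def)
  qed
next
  case (Some t)
  show ?thesis
  proof (cases "al + be * t = 0")
    case True
    have "ga + de * t \<noteq> 0"
      using matrix2_kernel_trivial[of al 1 be t ga de] True det by auto
    then show ?thesis
      using that[of "ga + de * t"] Some True by (simp add: mob_def proj_coords_def)
  next
    case False
    then show ?thesis
      using that[of "al + be * t"] Some by (simp add: mob_def proj_coords_def)
  qed
qed

lemma inj_mob:
  fixes al be ga de :: "'a::field"
  assumes det: "al * de - be * ga \<noteq> 0"
  shows "inj (mob al be ga de)"
proof (rule injI)
  fix x y assume eq: "mob al be ga de x = mob al be ga de y"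
  define X Y Z where "X = proj_coords x" and "Y = proj_coords y"
    and "Z = proj_coords (mob al be ga de x)"
  obtain \<mu> where \<mu>: "al * fst X + be * snd X = \<mu> * fst Z" "ga * fst X + de * snd X = \<mu> * snd Z"
    using mob_proj_coords[OF det] unfolding X_def Z_def by metis
  obtain \<nu> where \<nu>: "\<nu> \<noteq> 0" "al * fst Y + be * snd Y = \<nu> * fst Z" "ga * fst Y + de * snd Y = \<nu> * snd Z"
    using mob_proj_coords[OF det, of y] eq unfolding Y_def Z_def by metis
  define k where "k = \<mu> / \<nu>"
  have "al * (fst X - k * fst Y) + be * (snd X - k * snd Y) = (al * fst X + be * snd X) - k * (al * fst Y + be * snd Y)"
    "ga * (fst X - k * fst Y) + de * (snd X - k * snd Y) = (ga * fst X + de * snd X) - k * (ga * fst Y + de * snd Y)"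
    by (simp_all add: algebra_simps)
  moreover have "(al * fst X + be * snd X) - k * (al * fst Y + be * snd Y) = 0"
    "(ga * fst X + de * snd X) - k * (ga * fst Y + de * snd Y) = 0"
    using \<mu> \<nu> by (simp_all add: k_def)
  ultimately have "fst X - k * fst Y = 0 \<and> snd X - k * snd Y = 0"
    by (intro matrix2_kernel_trivial[OF _ _ det]) simp_all
  then have "fst X = k * fst Y" "snd X = k * snd Y"
    by simp_all
  then show "x = y"
    unfolding X_def Y_def by (cases x; cases y) (auto simp: proj_coords_def)
qed

lemma surj_mob:
  fixes al be ga de :: "'a::{field,finite}"
  assumes "al * de - be * ga \<noteq> 0"
  shows "surj (mob al be ga de)"
  using finite_UNIV_inj_surj[OF _ inj_mob[OF assms]] by simp

lemma card_mob_preimage: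
  fixes al be ga de :: "'a::{field,finite}"
  assumes "al * de - be * ga \<noteq> 0"
  shows "card {x. P (mob al be ga de x)} = card {y. P y}"
  using card_vimage_inj[OF inj_mob[OF assms], of "{y. P y}"] surj_mob[OF assms] by (simp add: vimage_def)

section \<open>The subfield \<open>F\<^sub>q\<close> of \<open>F\<^sub>q\<^sub>3\<close>\<close>

locale cubic_extension =
  fixes q :: nat and field_type :: "'a::{field,finite} itself"
  assumes prime_power: "\<exists>p k. prime p \<and> k > 0 \<and> q = p ^ k"
    and card_UNIV: "card (UNIV :: 'a set) = q ^ 3"
begin

lemma q_gt_1: "q > 1"
  using prime_power by (metis one_less_power prime_gt_1_nat)

lemma frobenius_add: "(x + y) ^ q = x ^ q + (y::'a) ^ q"
proof -
  obtain p k where pk: "prime p" "k > 0" "q = p ^ k"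
    using prime_power by blast
  have "prime CHAR('a)"
    by (simp add: prime_CHAR_semidom finite_imp_CHAR_pos)
  moreover have "CHAR('a) dvd p ^ (k * 3)"
    using CHAR_dvd_CARD[where 'a='a] card_UNIV pk by (simp add: power_mult)
  ultimately have "CHAR('a) = p"
    using pk(1) by (metis prime_dvd_power primes_dvd_imp_eq)
  then show ?thesis
    using pk freshmans_dream'[of q k x y] by simp
qed

lemma frobenius_minus: "(- x) ^ q = - ((x::'a) ^ q)"
proof -
  have "(- x) ^ q + x ^ q = 0"
    using frobenius_add[of "-x" x] q_gt_1 by (simp add: power_0_left)
  then show ?thesis
    by (simp add: eq_neg_iff_add_eq_0)
qed

lemma frobenius_diff: "(x - y) ^ q = x ^ q - (y::'a) ^ q"
  using frobenius_add[of x "-y"] frobenius_minus[of y] by simp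

lemma power_q_cube: "(x::'a) ^ (q^3) = x"
  using power_card_UNIV_eq_self[of x] card_UNIV by simp

lemma power_q_q: "((x::'a) ^ q) ^ q = x ^ (q^2)"
  by (simp add: power_mult[symmetric] power2_eq_square)

lemma power_q2_q: "((x::'a) ^ (q^2)) ^ q = x"
  using power_q_cube[of x] by (simp add: power_mult[symmetric] power2_eq_square power3_eq_cube)

lemma power_q_q2: "((x::'a) ^ q) ^ (q^2) = x"
  using power_q2_q[of x] by (simp add: power_mult[symmetric] mult.commute)

lemma power_q2_q2: "((x::'a) ^ (q^2)) ^ (q^2) = x ^ q"
proof -
  have "((x::'a) ^ (q^2)) ^ (q^2) = ((x ^ (q^2)) ^ q) ^ q"
    by (simp add: power_q_q)
  then show ?thesis
    by (simp add: power_q2_q)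
qed

lemma frobenius2_add: "(x + y) ^ (q^2) = x ^ (q^2) + (y::'a) ^ (q^2)"
  by (simp flip: power_q_q add: frobenius_add)

lemma frobenius2_diff: "(x - y) ^ (q^2) = x ^ (q^2) - (y::'a) ^ (q^2)"
  by (simp flip: power_q_q add: frobenius_diff)

lemmas frobenius_simps =
  power_mult_distrib power_q_q power_q2_q power_q_q2 power_q2_q2 frobenius_add frobenius2_add

lemma Fq_iff: "(x::'a) \<in> Fq q \<longleftrightarrow> x ^ q = x"
  by (simp add: Fq_def)

lemma Fq_0 [simp]: "(0::'a) \<in> Fq q"
  using q_gt_1 by (simp add: Fq_def)

lemma Fq_1 [simp]: "(1::'a) \<in> Fq q"
  by (simp add: Fq_def)

lemma Fq_add: "x \<in> Fq q \<Longrightarrow> y \<in> Fq q \<Longrightarrow> (x::'a) + y \<in> Fq q"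
  by (simp add: Fq_def frobenius_add)

lemma Fq_diff: "x \<in> Fq q \<Longrightarrow> y \<in> Fq q \<Longrightarrow> (x::'a) - y \<in> Fq q"
  by (simp add: Fq_def frobenius_diff)

lemma Fq_uminus: "x \<in> Fq q \<Longrightarrow> - (x::'a) \<in> Fq q"
  by (simp add: Fq_def frobenius_minus)

lemma Fq_mult: "x \<in> Fq q \<Longrightarrow> y \<in> Fq q \<Longrightarrow> (x::'a) * y \<in> Fq q"
  by (simp add: Fq_def power_mult_distrib)

lemma Fq_divide: "x \<in> Fq q \<Longrightarrow> y \<in> Fq q \<Longrightarrow> (x::'a) / y \<in> Fq q"
  by (simp add: Fq_def power_divide)

lemma Fq_power_q2: "x \<in> Fq q \<Longrightarrow> (x::'a) ^ (q^2) = x"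
  by (simp add: Fq_def flip: power_q_q)

definition field_trace :: "'a \<Rightarrow> 'a" where
  "field_trace x = x + x ^ q + x ^ (q^2)"

definition field_norm :: "'a \<Rightarrow> 'a" where
  "field_norm x = x * x ^ q * x ^ (q^2)"

lemma field_trace_in_Fq: "field_trace x \<in> Fq q"
  by (simp add: field_trace_def Fq_iff frobenius_add power_q_q power_q2_q add_ac)

lemma field_norm_in_Fq: "field_norm x \<in> Fq q"
  by (simp add: field_norm_def Fq_iff frobenius_simps mult_ac)

lemma field_norm_eq_0_iff [simp]: "field_norm x = 0 \<longleftrightarrow> x = 0"
  using q_gt_1 by (simp add: field_norm_def)

lemma card_Fq_le: "card (Fq q :: 'a set) \<le> q"
proof -
  have "Fq q = {x::'a. x ^ q + (\<Sum>k\<in>{1}. (- 1) * x ^ k) = 0}"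
    by (simp add: Fq_def)
  then show ?thesis
    using card_roots_monic_le[of "{1}" q "\<lambda>_. - 1 :: 'a"] q_gt_1 by simp
qed

lemma card_field_trace_kernel_le: "card {x. field_trace x = 0} \<le> q^2"
proof -
  have "q < q^2"
    using q_gt_1 by (simp add: power2_eq_square)
  then have q: "q < q^2" "1 < q^2" "q \<noteq> 1"
    using q_gt_1 by linarith+
  then have "{x. field_trace x = 0} = {x::'a. x ^ (q^2) + (\<Sum>k\<in>{q, 1}. 1 * x ^ k) = 0}"
    by (simp add: field_trace_def add_ac)
  then show ?thesis
    using card_roots_monic_le[of "{q, 1}" "q^2" "\<lambda>_. 1 :: 'a"] q by simp
qed

text \<open>The map \<open>x \<mapsto> x^q - x\<close> lands in the kernel of the trace and its fibres are cosets of
  \<open>F\<^sub>q\<close>, so \<open>q^3 \<le> q^2 |F\<^sub>q|\<close>.\<close>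
lemma card_Fq: "card (Fq q :: 'a set) = q"
proof -
  define f where "f x = x ^ q - (x::'a)" for x
  define s where "s = inv_into UNIV f"
  have f_s: "f (s (f x)) = f x" for x
    unfolding s_def by (rule f_inv_into_f) simp
  have "x - s (f x) \<in> Fq q" for x
    using f_s[of x] by (simp add: f_def Fq_iff frobenius_diff algebra_simps)
  moreover have "field_trace (f x) = 0" for x
    by (simp add: f_def field_trace_def frobenius_diff frobenius2_diff power_q_q power_q_q2)
  ultimately have "range (\<lambda>x. (f x, x - s (f x))) \<subseteq> {x. field_trace x = 0} \<times> Fq q"
    by auto
  moreover have "inj (\<lambda>x. (f x, x - s (f x)))"
    by (rule injI) auto
  ultimately have "card (UNIV::'a set) \<le> card ({x. field_trace x = 0} \<times> (Fq q :: 'a set))"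
    by (intro card_inj_on_le) auto
  also have "\<dots> \<le> q^2 * card (Fq q :: 'a set)"
    using card_field_trace_kernel_le by (simp add: card_cartesian_product)
  finally have "q^2 * q \<le> q^2 * card (Fq q :: 'a set)"
    using card_UNIV by (simp add: power3_eq_cube power2_eq_square mult_ac)
  then show ?thesis
    using card_Fq_le q_gt_1 by simp
qed

lemma Fq_has_third_element:
  assumes "3 \<le> q"
  obtains r :: 'a where "r \<in> Fq q" "r \<noteq> 0" "r \<noteq> 1"
proof -
  have "\<not> Fq q \<subseteq> {0::'a, 1}"
    using card_mono[of "{0::'a, 1}" "Fq q"] card_Fq assms card_insert_le[of "{1::'a}" 0] by auto
  then show ?thesis
    using that by blast
qed

lemma Fq_quadratic_eq_0:
  assumes "3 \<le> q" and vanish: "\<forall>r\<in>Fq q. a + r * b + r^2 * (c::'a) = 0"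
  shows "a = 0" "b = 0" "c = 0"
proof -
  obtain r :: 'a where r: "r \<in> Fq q" "r \<noteq> 0" "r \<noteq> 1"
    using Fq_has_third_element[OF assms(1)] .
  show a: "a = 0"
    using vanish Fq_0 by fastforce
  then have "b = - c" "r * b + r^2 * c = 0"
    using vanish Fq_1 r(1) by (fastforce simp: eq_neg_iff_add_eq_0)+
  then have "(r * (r - 1)) * c = 0"
    by (simp add: algebra_simps power2_eq_square)
  then show "c = 0"
    using r by simp
  with \<open>b = - c\<close> show "b = 0"
    by simp
qed

text \<open>A quadratic over \<open>F\<^sub>q\<close> cannot have roots in \<open>F\<^sub>q\<^sub>3 - F\<^sub>q\<close>: the root \<open>u\<close> and its
  conjugate \<open>u^q\<close> would have sum \<open>-x/y\<close>, and so would \<open>u^q\<close> and \<open>u^q^2\<close>, forcing \<open>u = u^q^2\<close>.\<close>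
lemma Fq_quadratic_root_in_Fq:
  assumes coeffs: "x \<in> Fq q" "y \<in> Fq q" "z \<in> Fq q" and "y \<noteq> 0"
    and root: "y * u * u + x * u + (z::'a) = 0"
  shows "u \<in> Fq q"
proof (rule ccontr)
  assume "u \<notin> Fq q"
  then have u_conj: "u ^ q \<noteq> u"
    by (simp add: Fq_iff)
  have "(y * u * u + x * u + z) ^ q = 0"
    using root q_gt_1 by (simp add: power_0_left)
  then have root_conj: "y * u^q * u^q + x * u^q + z = 0"
    using coeffs by (simp add: frobenius_add power_mult_distrib Fq_iff)
  have "(u - u^q) * (y * (u + u^q) + x) = (y * u * u + x * u + z) - (y * u^q * u^q + x * u^q + z)"
    by (simp add: algebra_simps)
  then have "(u - u^q) * (y * (u + u^q) + x) = 0"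
    using root root_conj by simp
  then have sum1: "y * (u + u^q) + x = 0"
    using u_conj by simp
  then have "(y * (u + u^q) + x) ^ q = 0"
    using q_gt_1 by (simp add: power_0_left)
  then have sum2: "y * (u^q + u^(q^2)) + x = 0"
    using coeffs by (simp add: frobenius_add power_mult_distrib Fq_iff power_q_q)
  have "y * (u - u^(q^2)) = (y * (u + u^q) + x) - (y * (u^q + u^(q^2)) + x)"
    by (simp add: algebra_simps)
  then have "y * (u - u^(q^2)) = 0"
    using sum1 sum2 by simp
  then have "u ^ (q^2) = u"
    using \<open>y \<noteq> 0\<close> by simp
  then have "u ^ q = u"
    by (metis power_q2_q)
  with u_conj show False ..
qed

definition Fq_linear_form :: "('a \<Rightarrow> 'a) \<Rightarrow> bool" where
  "Fq_linear_form f \<longleftrightarrow> (\<forall>x. f x \<in> Fq q) \<and> (\<forall>x y. f (x + y) = f x + f y)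
     \<and> (\<forall>l\<in>Fq q. \<forall>x. f (l * x) = l * f x)"

lemma Fq_linear_form_in_Fq: "Fq_linear_form f \<Longrightarrow> f x \<in> Fq q"
  by (simp add: Fq_linear_form_def)

lemma Fq_linear_form_add: "Fq_linear_form f \<Longrightarrow> f (x + y) = f x + f y"
  by (simp add: Fq_linear_form_def)

lemma Fq_linear_form_scale: "Fq_linear_form f \<Longrightarrow> l \<in> Fq q \<Longrightarrow> f (l * x) = l * f x"
  by (simp add: Fq_linear_form_def)

lemma Fq_linear_form_0: "Fq_linear_form f \<Longrightarrow> f 0 = 0"
  using Fq_linear_form_scale[of f 0 0] by simp

lemma Fq_linear_form_diff: "Fq_linear_form f \<Longrightarrow> f (x - y) = f x - f y"
  using Fq_linear_form_add[of f "x - y" y] by (simp add: algebra_simps)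

lemma Fq_linear_form_of_Fq: "Fq_linear_form f \<Longrightarrow> l \<in> Fq q \<Longrightarrow> f l = l * f 1"
  using Fq_linear_form_scale[of f l 1] by simp

lemma card_Fq_linear_form_kernel:
  assumes f: "Fq_linear_form f" and "f v \<noteq> 0"
  shows "card {x. f x = 0} = q^2"
proof -
  define w where "w = v / f v"
  have "f w = 1"
    using Fq_linear_form_scale[OF f Fq_divide[OF Fq_1 Fq_linear_form_in_Fq[OF f]], of v] \<open>f v \<noteq> 0\<close>
    by (simp add: w_def)
  then have "bij_betw (\<lambda>(k, l). k + l * w) ({x. f x = 0} \<times> Fq q) UNIV"
    using Fq_linear_form_add[OF f] Fq_linear_form_diff[OF f] Fq_linear_form_in_Fq[OF f]
      Fq_linear_form_scale[OF f]
    by (intro bij_betwI[where g = "\<lambda>y. (y - f y * w, f y)"]) auto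
  then have "card ({x. f x = 0} \<times> (Fq q :: 'a set)) = card (UNIV :: 'a set)"
    by (rule bij_betw_same_card)
  then have "card {x. f x = 0} * q = q^2 * q"
    using card_Fq card_UNIV by (simp add: card_cartesian_product power3_eq_cube power2_eq_square)
  then show ?thesis
    using q_gt_1 by simp
qed

definition quad_form :: "('a \<Rightarrow> 'a) \<Rightarrow> ('a \<Rightarrow> 'a) \<Rightarrow> 'a \<Rightarrow> 'a" where
  "quad_form B C t = B t + C (t^q * t^(q^2))"

lemma quad_form_in_Fq:
  "Fq_linear_form B \<Longrightarrow> Fq_linear_form C \<Longrightarrow> quad_form B C t \<in> Fq q"
  by (simp add: quad_form_def Fq_add Fq_linear_form_in_Fq)

lemma quad_form_Fq_scale:
  assumes "Fq_linear_form B" "Fq_linear_form C" and r: "r \<in> Fq q"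
  shows "quad_form B C (r * t) = r * B t + r^2 * C (t^q * t^(q^2))"
proof -
  have "r ^ q = r" "r ^ (q^2) = r"
    using r by (simp_all add: Fq_iff Fq_power_q2)
  then have "(r * t)^q * (r * t)^(q^2) = r^2 * (t^q * t^(q^2))"
    by (simp add: power_mult_distrib power2_eq_square mult_ac)
  then show ?thesis
    using assms by (simp add: quad_form_def Fq_linear_form_scale Fq_mult power2_eq_square)
qed

lemma inj_on_Fq_span:
  assumes "(u::'a) \<notin> Fq q"
  shows "inj_on (\<lambda>(c, l). c + l * u) (Fq q \<times> Fq q)"
proof (rule inj_onI, clarify)
  fix c l c' l' assume Fq: "c \<in> Fq q" "l \<in> Fq q" "c' \<in> Fq q" "l' \<in> Fq q"
    and eq: "c + l * u = c' + l' * u"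
  show "c = c' \<and> l = l'"
  proof (cases "l = l'")
    case False
    then have "u = (c' - c) / (l - l')"
      using eq by (simp add: field_simps)
    moreover have "(c' - c) / (l - l') \<in> Fq q"
      using Fq by (intro Fq_divide Fq_diff)
    ultimately have "u \<in> Fq q"
      by simp
    with assms show ?thesis ..
  qed (use eq in simp)
qed

end

section \<open>Zeros of \<open>B(t) + C(t\<^sup>q\<^sup>+\<^sup>q\<^sup>2)\<close>\<close>

locale Fq_vanishing_quad_form = cubic_extension q field_type
  for q :: nat and field_type :: "'a::{field,finite} itself" +
  fixes B C :: "'a \<Rightarrow> 'a"
  assumes B: "Fq_linear_form B" and C: "Fq_linear_form C"
    and B_1: "B 1 = 0" and C_1: "C 1 = 0"
begin

lemma quad_form_Fq_eq_0: "c \<in> Fq q \<Longrightarrow> quad_form B C c = 0"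
  using quad_form_Fq_scale[OF B C, of c 1] B_1 C_1 by simp

lemma C_Fq_shift: "d \<in> Fq q \<Longrightarrow> C (t + d) = C t"
  using Fq_linear_form_add[OF C] Fq_linear_form_of_Fq[OF C] C_1 by simp

text \<open>Translating by \<open>d \<in> F\<^sub>q\<close> adds \<open>d Tr(t) - d t + d^2\<close> to \<open>t^q t^q^2\<close>, and \<open>C\<close> kills
  \<open>F\<^sub>q\<close>.\<close>
lemma quad_form_Fq_shift:
  assumes d: "d \<in> Fq q"
  shows "quad_form B C (t + d) = quad_form B C t - d * C t"
proof -
  have "(t + d)^q * (t + d)^(q^2) = t^q * t^(q^2) + (d * field_trace t - d * t) + (d * d) * 1"
    using d by (simp add: frobenius_add frobenius2_add Fq_iff Fq_power_q2 algebra_simps field_trace_def)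
  then have "C ((t + d)^q * (t + d)^(q^2))
      = C (t^q * t^(q^2)) + C (d * field_trace t - d * t) + C ((d * d) * 1)"
    by (simp only: Fq_linear_form_add[OF C])
  also have "C (d * field_trace t - d * t) = - (d * C t)"
    using Fq_linear_form_diff[OF C] Fq_linear_form_scale[OF C d]
      Fq_linear_form_of_Fq[OF C field_trace_in_Fq] C_1 by simp
  also have "C ((d * d) * 1) = 0"
    using Fq_linear_form_scale[OF C Fq_mult[OF d d], of 1] C_1 by simp
  moreover have "B (t + d) = B t"
    using Fq_linear_form_add[OF B] Fq_linear_form_of_Fq[OF B d] B_1 by simp
  ultimately show ?thesis
    by (simp add: quad_form_def)
qed

text \<open>Each \<open>F\<^sub>q\<close>-coset outside \<open>ker C\<close> contains exactly one zero, namely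
  \<open>y + quad_form B C y / C y\<close>.\<close>
lemma card_zeros_outside_kernel:
  assumes "C v \<noteq> 0"
  shows "card ({t. quad_form B C t = 0} - {t. C t = 0}) = q^2 - q"
proof -
  define S where "S = {t. quad_form B C t = 0}"
  define K where "K = {t. C t = 0}"
  define shift where "shift y = quad_form B C y / C y" for y
  have shift_Fq: "shift y \<in> Fq q" for y
    unfolding shift_def using Fq_divide quad_form_in_Fq[OF B C] Fq_linear_form_in_Fq[OF C] by blast
  have "bij_betw (\<lambda>(s, c). s + c) ((S - K) \<times> Fq q) (UNIV - K)"
  proof (rule bij_betwI[where g = "\<lambda>y. (y + shift y, - shift y)"])
    show "(\<lambda>(s, c). s + c) \<in> (S - K) \<times> Fq q \<rightarrow> UNIV - K"
      using C_Fq_shift by (auto simp: K_def)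
    show "(\<lambda>y. (y + shift y, - shift y)) \<in> UNIV - K \<rightarrow> (S - K) \<times> Fq q"
      using quad_form_Fq_shift[OF shift_Fq] C_Fq_shift[OF shift_Fq] Fq_uminus[OF shift_Fq]
      by (auto simp: S_def K_def shift_def)
    show "(\<lambda>y. (y + shift y, - shift y)) ((\<lambda>(s, c). s + c) x) = x" if "x \<in> (S - K) \<times> Fq q" for x
      using that quad_form_Fq_shift C_Fq_shift by (auto simp: S_def K_def shift_def)
  qed auto
  then have "card ((S - K) \<times> (Fq q :: 'a set)) = card (UNIV - K)"
    by (rule bij_betw_same_card)
  also have "card (UNIV - K) = q^3 - q^2"
    using card_Fq_linear_form_kernel[OF C assms] card_UNIV by (simp add: K_def card_Diff_subset)
  also have "q^3 - q^2 = (q^2 - q) * q"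
    by (simp add: power3_eq_cube power2_eq_square diff_mult_distrib)
  finally show ?thesis
    using q_gt_1 by (simp add: card_cartesian_product card_Fq S_def K_def)
qed

lemma kernel_eq_Fq_span:
  assumes "C v \<noteq> 0" and "C u = 0" and "u \<notin> Fq q"
  shows "{t. C t = 0} = (\<lambda>(c, l). c + l * u) ` (Fq q \<times> Fq q)"
proof (rule card_subset_eq[symmetric])
  show "(\<lambda>(c, l). c + l * u) ` (Fq q \<times> Fq q) \<subseteq> {t. C t = 0}"
    using Fq_linear_form_add[OF C] Fq_linear_form_scale[OF C] Fq_linear_form_of_Fq[OF C] C_1
      \<open>C u = 0\<close> by auto
  show "card ((\<lambda>(c, l). c + l * u) ` (Fq q \<times> Fq q)) = card {t. C t = 0}"
    using card_image[OF inj_on_Fq_span[OF \<open>u \<notin> Fq q\<close>]] card_Fq_linear_form_kernel[OF C \<open>C v \<noteq> 0\<close>]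
    by (simp add: card_cartesian_product card_Fq power2_eq_square)
qed simp

text \<open>Otherwise \<open>u^q u^q^2 = c + l u\<close> with \<open>c, l \<in> F\<^sub>q\<close>; multiplying by \<open>u\<close> makes \<open>u\<close> a
  root of a quadratic over \<open>F\<^sub>q\<close>, or, if \<open>l = 0\<close>, the quotient \<open>N(u) / c \<in> F\<^sub>q\<close>.\<close>
lemma conj_product_notin_kernel:
  assumes "C v \<noteq> 0" and "C u = 0" and u: "u \<notin> Fq q"
  shows "C (u^q * u^(q^2)) \<noteq> 0"
proof
  assume "C (u^q * u^(q^2)) = 0"
  then have "u^q * u^(q^2) \<in> (\<lambda>(c, l). c + l * u) ` (Fq q \<times> Fq q)"
    using kernel_eq_Fq_span[OF assms] by blast
  then obtain c l where cl: "c \<in> Fq q" "l \<in> Fq q" "u^q * u^(q^2) = c + l * u"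
    by auto
  have norm: "field_norm u = u * (c + l * u)"
    using cl(3) by (simp add: field_norm_def mult.assoc)
  show False
  proof (cases "l = 0")
    case False
    have "l * u * u + c * u + - field_norm u = 0"
      using norm by (simp add: algebra_simps)
    then have "u \<in> Fq q"
      using Fq_quadratic_root_in_Fq[OF cl(1,2) Fq_uminus[OF field_norm_in_Fq] False] by blast
    with u show False ..
  next
    case True
    have "u \<noteq> 0"
      using u by auto
    then have "c \<noteq> 0" and "u = field_norm u / c"
      using norm True by auto
    then have "u \<in> Fq q"
      using Fq_divide[OF field_norm_in_Fq cl(1)] by metis
    with u show False ..
  qed
qed

lemma quad_form_on_kernel:
  assumes "C u = 0" and "c \<in> Fq q" and l: "l \<in> Fq q"
  shows "quad_form B C (c + l * u) = l * (B u + l * C (u^q * u^(q^2)))"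
proof -
  have "quad_form B C (c + l * u) = quad_form B C (l * u)"
    using quad_form_Fq_shift[OF \<open>c \<in> Fq q\<close>, of "l * u"] Fq_linear_form_scale[OF C l] \<open>C u = 0\<close>
    by (simp add: add.commute)
  then show ?thesis
    using quad_form_Fq_scale[OF B C l] by (simp add: power2_eq_square algebra_simps)
qed

text \<open>On \<open>ker C = F\<^sub>q + F\<^sub>q u\<close> the zeros are the lines \<open>l = 0\<close> and \<open>l = -B(u) / C(u^q u^q^2)\<close>,
  which may coincide.\<close>
lemma card_zeros_in_kernel:
  assumes "C v \<noteq> 0"
  shows "card ({t. quad_form B C t = 0} \<inter> {t. C t = 0}) \<in> {q, 2 * q}"
proof -
  obtain u where u: "C u = 0" "u \<notin> Fq q"
  proof -
    have "card {t. C t = 0} > card (Fq q :: 'a set)"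
      using card_Fq_linear_form_kernel[OF C assms] card_Fq q_gt_1 by (simp add: power2_eq_square)
    then have "\<not> {t. C t = 0} \<subseteq> Fq q"
      by (meson card_mono finite leD)
    then show ?thesis
      using that by blast
  qed
  define g where "g = C (u^q * u^(q^2))"
  define r where "r = - B u / g"
  have "g \<noteq> 0"
    unfolding g_def using conj_product_notin_kernel[OF assms u] .
  have r: "r \<in> Fq q"
    unfolding r_def g_def
    using Fq_divide Fq_uminus Fq_linear_form_in_Fq[OF B] Fq_linear_form_in_Fq[OF C] by blast
  have "B u + l * g = 0 \<longleftrightarrow> l = r" for l
    using \<open>g \<noteq> 0\<close> by (auto simp: r_def field_simps add_eq_0_iff)
  then have zero_iff: "l * (B u + l * g) = 0 \<longleftrightarrow> l \<in> {0, r}" for l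
    by auto
  have "{t. quad_form B C t = 0} \<inter> {t. C t = 0} = (\<lambda>(c, l). c + l * u) ` (Fq q \<times> {0, r})"
    unfolding kernel_eq_Fq_span[OF assms u]
    using quad_form_on_kernel[OF u(1)] zero_iff r quad_form_Fq_eq_0 by (auto simp: g_def)
  moreover have "inj_on (\<lambda>(c, l). c + l * u) (Fq q \<times> {0, r})"
    using r by (intro inj_on_subset[OF inj_on_Fq_span[OF u(2)]]) auto
  ultimately have "card ({t. quad_form B C t = 0} \<inter> {t. C t = 0}) = q * card {0, r}"
    by (simp add: card_image card_cartesian_product card_Fq)
  then show ?thesis
    by (cases "r = 0") auto
qed

theorem card_quad_form_zeros:
  assumes "\<exists>t. quad_form B C t \<noteq> 0"
  shows "card {t. quad_form B C t = 0} \<in> {q^2, q^2 + q}"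
proof (cases "\<forall>x. C x = 0")
  case True
  then have "{t. quad_form B C t = 0} = {t. B t = 0}"
    by (simp add: quad_form_def)
  moreover obtain t where "B t \<noteq> 0"
    using assms True by (auto simp: quad_form_def)
  ultimately show ?thesis
    using card_Fq_linear_form_kernel[OF B] by simp
next
  case False
  then obtain v where v: "C v \<noteq> 0"
    by blast
  have "card {t. quad_form B C t = 0}
      = card ({t. quad_form B C t = 0} \<inter> {t. C t = 0}) + card ({t. quad_form B C t = 0} - {t. C t = 0})"
    by (simp add: card_Int_Diff)
  moreover have "q \<le> q^2"
    by (simp add: power2_eq_square)
  ultimately show ?thesis
    using card_zeros_in_kernel[OF v] card_zeros_outside_kernel[OF v] by auto
qed

end

section \<open>Tensor coordinates on \<open>U\<^sub>1\<close>\<close>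

context cubic_extension
begin

lemma less_8_cases: "i < (8::nat) \<Longrightarrow> i = 0 \<or> i = 1 \<or> i = 2 \<or> i = 3 \<or> i = 4 \<or> i = 5 \<or> i = 6 \<or> i = 7"
  by presburger

lemma sum_lessThan_8: "(\<Sum>j<(8::nat). f j) = f 0 + f 1 + f 2 + f 3 + f 4 + f 5 + f 6 + (f 7 :: 'a)"
  by (simp add: eval_nat_numeral add_ac)

lemma U1vec_nth:
  "U1vec q a b c d 0 = a" "U1vec q a b c d 1 = b ^ (q^2)" "U1vec q a b c d (Suc 0) = b ^ (q^2)"
  "U1vec q a b c d 2 = b ^ q" "U1vec q a b c d 3 = c" "U1vec q a b c d 4 = b"
  "U1vec q a b c d 5 = c ^ q" "U1vec q a b c d 6 = c ^ (q^2)" "U1vec q a b c d 7 = d"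
  "8 \<le> i \<Longrightarrow> U1vec q a b c d i = 0"
  by (simp_all add: U1vec_def vec8_def)

lemma U1vec_in_U1: "a \<in> Fq q \<Longrightarrow> d \<in> Fq q \<Longrightarrow> U1vec q a b c (d::'a) \<in> U1 q"
  unfolding U1_def by blast

lemma U1vec_add:
  "(\<lambda>i. U1vec q a b c d i + U1vec q a' b' c' d' i) = U1vec q (a + a') (b + b') (c + c') (d + (d'::'a))"
proof
  fix i show "U1vec q a b c d i + U1vec q a' b' c' d' i = U1vec q (a + a') (b + b') (c + c') (d + d') i"
    by (cases "i < 8") (auto dest!: less_8_cases simp: U1vec_nth frobenius_add frobenius2_add)
qed

lemma U1vec_scale:
  assumes "l \<in> Fq q"
  shows "(\<lambda>i. l * U1vec q a b c d i) = U1vec q (l * a) (l * b) (l * c) (l * (d::'a))"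
proof
  have "l ^ q = l" "l ^ (q^2) = l"
    using assms by (simp_all add: Fq_iff Fq_power_q2)
  then show "l * U1vec q a b c d i = U1vec q (l * a) (l * b) (l * c) (l * d) i" for i
    by (cases "i < 8") (auto dest!: less_8_cases simp: U1vec_nth power_mult_distrib)
qed

definition frobenius_coords :: "(nat \<Rightarrow> 'a) \<Rightarrow> bool" where
  "frobenius_coords v \<longleftrightarrow> (\<forall>i\<ge>8. v i = 0) \<and> v 0 ^ q = v 0 \<and> v 7 ^ q = v 7
     \<and> v 4 ^ q = v 2 \<and> v 2 ^ q = v 1 \<and> v 1 ^ q = v 4 \<and> v 3 ^ q = v 5 \<and> v 5 ^ q = v 6 \<and> v 6 ^ q = v 3"

lemma U1_iff_frobenius_coords: "v \<in> U1 q \<longleftrightarrow> frobenius_coords v"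
proof
  assume "v \<in> U1 q"
  then obtain a b c d where "v = U1vec q a b c d" "a \<in> Fq q" "d \<in> Fq q"
    unfolding U1_def by blast
  then show "frobenius_coords v"
    by (simp add: frobenius_coords_def U1vec_nth Fq_iff frobenius_simps)
next
  assume v: "frobenius_coords v"
  then have "v 1 = v 4 ^ (q^2)" "v 6 = v 3 ^ (q^2)"
    unfolding frobenius_coords_def by (metis power_q_q)+
  then have "v = U1vec q (v 0) (v 4) (v 3) (v 7)"
    using v unfolding frobenius_coords_def
    by (intro ext, case_tac "x < 8") (auto dest!: less_8_cases simp: U1vec_nth)
  moreover have "v 0 \<in> Fq q" "v 7 \<in> Fq q"
    using v by (auto simp: frobenius_coords_def Fq_iff)
  ultimately show "v \<in> U1 q"
    by (metis U1vec_in_U1)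
qed

lemma U1_add: "(u::nat \<Rightarrow> 'a) \<in> U1 q \<Longrightarrow> w \<in> U1 q \<Longrightarrow> (\<lambda>i. u i + w i) \<in> U1 q"
  by (simp add: U1_iff_frobenius_coords frobenius_coords_def frobenius_add)

lemma U1_scale: "(u::nat \<Rightarrow> 'a) \<in> U1 q \<Longrightarrow> l \<in> Fq q \<Longrightarrow> (\<lambda>i. l * u i) \<in> U1 q"
  by (simp add: U1_iff_frobenius_coords frobenius_coords_def Fq_iff power_mult_distrib)

text \<open>Coordinate \<open>j = 4 j\<^sub>1 + 2 j\<^sub>2 + j\<^sub>3\<close> of \<open>U\<^sub>1\<close> is the coefficient of
  \<open>e\<^sub>j\<^sub>1 \<otimes> e\<^sub>j\<^sub>2\<^sup>q \<otimes> e\<^sub>j\<^sub>3\<^sup>q\<^sup>2\<close>, so \<open>cube_vec x y\<close> is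
  \<open>(x, y) \<otimes> (x, y)\<^sup>q \<otimes> (x, y)\<^sup>q\<^sup>2\<close>.\<close>
definition pair_entry :: "'a \<Rightarrow> 'a \<Rightarrow> nat \<Rightarrow> 'a" where
  "pair_entry x y r = (if r = 0 then x else y)"

definition cube_vec :: "'a \<Rightarrow> 'a \<Rightarrow> nat \<Rightarrow> 'a" where
  "cube_vec x y j = (if j < 8 then pair_entry x y (j div 4) * pair_entry x y (j div 2 mod 2) ^ q
     * pair_entry x y (j mod 2) ^ (q^2) else 0)"

lemma cube_vec_nth:
  "cube_vec x y 0 = x * x^q * x^(q^2)" "cube_vec x y 1 = x * x^q * y^(q^2)"
  "cube_vec x y (Suc 0) = x * x^q * y^(q^2)" "cube_vec x y 2 = x * y^q * x^(q^2)"
  "cube_vec x y 3 = x * y^q * y^(q^2)" "cube_vec x y 4 = y * x^q * x^(q^2)"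
  "cube_vec x y 5 = y * x^q * y^(q^2)" "cube_vec x y 6 = y * y^q * x^(q^2)"
  "cube_vec x y 7 = y * y^q * y^(q^2)"
  by (simp_all add: cube_vec_def pair_entry_def)

lemma cube_vec_eq_U1vec:
  "cube_vec x y = U1vec q (field_norm x) (y * x^q * x^(q^2)) (x * y^q * y^(q^2)) (field_norm y)"
proof
  fix i show "cube_vec x y i = U1vec q (field_norm x) (y * x^q * x^(q^2)) (x * y^q * y^(q^2)) (field_norm y) i"
    by (cases "i < 8")
      (auto dest!: less_8_cases simp: cube_vec_def pair_entry_def U1vec_nth field_norm_def frobenius_simps mult_ac)
qed

lemma cube_vec_in_U1: "cube_vec x y \<in> U1 q"
  unfolding cube_vec_eq_U1vec by (intro U1vec_in_U1 field_norm_in_Fq)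

lemma cube_vec_scale: "cube_vec (m * x) (m * y) = (\<lambda>j. field_norm m * cube_vec x y j)"
proof
  have "pair_entry (m * x) (m * y) r = m * pair_entry x y r" for r
    by (simp add: pair_entry_def)
  then show "cube_vec (m * x) (m * y) j = field_norm m * cube_vec x y j" for j
    by (simp add: cube_vec_def field_norm_def power_mult_distrib mult_ac)
qed

definition mat_entry :: "'a \<Rightarrow> 'a \<Rightarrow> 'a \<Rightarrow> 'a \<Rightarrow> nat \<Rightarrow> nat \<Rightarrow> 'a" where
  "mat_entry al be ga de r s = (if r = 0 then (if s = 0 then al else be) else (if s = 0 then ga else de))"

text \<open>The action of \<open>A \<otimes> A\<^sup>q \<otimes> A\<^sup>q\<^sup>2\<close> for \<open>A = [[al, be], [ga, de]]\<close>.\<close>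
definition cube_action :: "'a \<Rightarrow> 'a \<Rightarrow> 'a \<Rightarrow> 'a \<Rightarrow> (nat \<Rightarrow> 'a) \<Rightarrow> nat \<Rightarrow> 'a" where
  "cube_action al be ga de v i = (if i < 8 then (\<Sum>j<8. mat_entry al be ga de (i div 4) (j div 4)
      * mat_entry al be ga de (i div 2 mod 2) (j div 2 mod 2) ^ q
      * mat_entry al be ga de (i mod 2) (j mod 2) ^ (q^2) * v j) else 0)"

lemma cube_action_cube_vec:
  "cube_action al be ga de (cube_vec x y) = cube_vec (al * x + be * y) (ga * x + de * y)"
proof
  fix i
  let ?M = "mat_entry al be ga de"
  show "cube_action al be ga de (cube_vec x y) i = cube_vec (al * x + be * y) (ga * x + de * y) i"
  proof (cases "i < 8")
    case True
    have "pair_entry (al * x + be * y) (ga * x + de * y) r = ?M r 0 * x + ?M r 1 * y" for r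
      by (simp add: pair_entry_def mat_entry_def)
    then have "cube_vec (al * x + be * y) (ga * x + de * y) i = (?M (i div 4) 0 * x + ?M (i div 4) 1 * y)
        * (?M (i div 2 mod 2) 0 * x + ?M (i div 2 mod 2) 1 * y) ^ q
        * (?M (i mod 2) 0 * x + ?M (i mod 2) 1 * y) ^ (q^2)"
      using True by (simp add: cube_vec_def)
    then show ?thesis
      using True by (simp add: cube_action_def sum_lessThan_8 cube_vec_nth frobenius_add frobenius2_add power_q_q power_q2_q power_q_q2 power_q2_q2 algebra_simps)
  qed (simp add: cube_action_def cube_vec_def)
qed

lemma cube_action_in_U1: "v \<in> U1 q \<Longrightarrow> cube_action al be ga de v \<in> U1 q"
  unfolding U1_iff_frobenius_coords frobenius_coords_def
  by (simp add: cube_action_def sum_lessThan_8 mat_entry_def frobenius_simps mult_ac add_ac)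

lemma cube_action_add:
  "cube_action al be ga de (\<lambda>i. u i + w i) = (\<lambda>i. cube_action al be ga de u i + cube_action al be ga de w i)"
  by (rule ext) (simp add: cube_action_def sum.distrib algebra_simps)

lemma cube_action_scale:
  "cube_action al be ga de (\<lambda>i. l * u i) = (\<lambda>i. l * cube_action al be ga de u i)"
  by (rule ext) (simp add: cube_action_def sum_distrib_left mult_ac)

definition theta_vec :: "'a option \<Rightarrow> nat \<Rightarrow> 'a" where
  "theta_vec x = cube_vec (fst (proj_coords x)) (snd (proj_coords x))"

lemma theta_vec_Some: "theta_vec (Some t) = U1vec q 1 t (t^q * t^(q^2)) (field_norm t)"
  by (simp add: theta_vec_def proj_coords_def cube_vec_eq_U1vec field_norm_def)

lemma theta_vec_None: "theta_vec None = U1vec q 0 0 0 1"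
  using q_gt_1 by (simp add: theta_vec_def proj_coords_def cube_vec_eq_U1vec field_norm_def power_0_left)

lemma theta_vec_in_U1: "theta_vec x \<in> U1 q"
  by (simp add: theta_vec_def cube_vec_in_U1)

lemma theta_eq_pt_theta_vec: "theta q x = pt q (theta_vec x)"
proof (cases x)
  case (Some t)
  have "t ^ (q^2 + q) = t^q * t^(q^2)" "t ^ (q^2 + q + 1) = field_norm t"
    by (simp_all add: power_add field_norm_def mult_ac)
  then show ?thesis
    using Some by (simp add: theta_def theta_vec_Some)
qed (simp add: theta_def theta_vec_None)

lemma cube_action_theta_vec:
  assumes "al * de - be * ga \<noteq> 0"
  obtains \<mu> where "\<mu> \<noteq> 0"
    "cube_action al be ga de (theta_vec x) = (\<lambda>j. field_norm \<mu> * theta_vec (mob al be ga de x) j)"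
proof -
  obtain \<mu> where "\<mu> \<noteq> 0"
    "al * fst (proj_coords x) + be * snd (proj_coords x) = \<mu> * fst (proj_coords (mob al be ga de x))"
    "ga * fst (proj_coords x) + de * snd (proj_coords x) = \<mu> * snd (proj_coords (mob al be ga de x))"
    using mob_proj_coords[OF assms] by metis
  then show ?thesis
    using that[of \<mu>] by (simp add: theta_vec_def cube_action_cube_vec cube_vec_scale)
qed

lemma inj_theta: "inj (theta q :: 'a option \<Rightarrow> _)"
proof (rule injI)
  fix x y :: "'a option"
  assume "theta q x = theta q y"
  moreover have "theta_vec y \<in> pt q (theta_vec y)"
    unfolding pt_def by (rule CollectI, rule exI[of _ 1]) simp
  ultimately obtain l where l: "theta_vec y = (\<lambda>i. l * theta_vec x i)"
    unfolding pt_def theta_eq_pt_theta_vec by blast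
  have "theta_vec y 0 = l * theta_vec x 0" "theta_vec y 4 = l * theta_vec x 4"
    "theta_vec y 7 = l * theta_vec x 7"
    using fun_cong[OF l] by simp_all
  then show "x = y"
    by (cases x; cases y) (simp_all add: theta_vec_Some theta_vec_None U1vec_nth)
qed

section \<open>Linear forms on \<open>U\<^sub>1\<close>\<close>

definition U1_form :: "((nat \<Rightarrow> 'a) \<Rightarrow> 'a) \<Rightarrow> bool" where
  "U1_form \<phi> \<longleftrightarrow> (\<forall>u\<in>U1 q. \<phi> u \<in> Fq q)
     \<and> (\<forall>u\<in>U1 q. \<forall>w\<in>U1 q. \<phi> (\<lambda>i. u i + w i) = \<phi> u + \<phi> w)
     \<and> (\<forall>l\<in>Fq q. \<forall>u\<in>U1 q. \<phi> (\<lambda>i. l * u i) = l * \<phi> u)"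

lemma U1_form_in_Fq: "U1_form \<phi> \<Longrightarrow> u \<in> U1 q \<Longrightarrow> \<phi> u \<in> Fq q"
  by (simp add: U1_form_def)

lemma U1_form_add: "U1_form \<phi> \<Longrightarrow> u \<in> U1 q \<Longrightarrow> w \<in> U1 q \<Longrightarrow> \<phi> (\<lambda>i. u i + w i) = \<phi> u + \<phi> w"
  by (simp add: U1_form_def)

lemma U1_form_scale: "U1_form \<phi> \<Longrightarrow> l \<in> Fq q \<Longrightarrow> u \<in> U1 q \<Longrightarrow> \<phi> (\<lambda>i. l * u i) = l * \<phi> u"
  by (simp add: U1_form_def)

lemma U1_form_comp_cube_action:
  "U1_form \<phi> \<Longrightarrow> U1_form (\<lambda>u. \<phi> (cube_action al be ga de u))"
  by (simp add: U1_form_def cube_action_in_U1 cube_action_add cube_action_scale U1_add U1_scale)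

lemma fq_subspace_add:
  "fq_subspace q H \<Longrightarrow> x \<in> H \<Longrightarrow> y \<in> H \<Longrightarrow> (\<lambda>i. x i + y i) \<in> H"
  by (simp add: fq_subspace_def)

lemma fq_subspace_scale:
  "fq_subspace q H \<Longrightarrow> l \<in> Fq q \<Longrightarrow> x \<in> H \<Longrightarrow> (\<lambda>i. l * x i) \<in> H"
  by (simp add: fq_subspace_def)

lemma fq_subspace_diff:
  assumes "fq_subspace q H" "x \<in> H" "(y :: nat \<Rightarrow> 'a) \<in> H"
  shows "(\<lambda>i. x i - y i) \<in> H"
  using fq_subspace_add[OF assms(1,2) fq_subspace_scale[OF assms(1) Fq_uminus[OF Fq_1] assms(3)]]
  by simp

definition hyperplane_coeff :: "(nat \<Rightarrow> 'a) set \<Rightarrow> (nat \<Rightarrow> 'a) \<Rightarrow> (nat \<Rightarrow> 'a) \<Rightarrow> 'a" where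
  "hyperplane_coeff H v u = (THE l. l \<in> Fq q \<and> (\<lambda>i. u i - l * v i) \<in> H)"

context
  fixes H :: "(nat \<Rightarrow> 'a) set" and v :: "nat \<Rightarrow> 'a"
  assumes hyp: "hyperplane q H" and v: "v \<in> U1 q" "v \<notin> H"
begin

lemma hyperplane_coeff_unique:
  assumes "l \<in> Fq q" "l' \<in> Fq q" "(\<lambda>i. u i - l * v i) \<in> H" "(\<lambda>i. u i - l' * v i) \<in> H"
  shows "l = l'"
proof (rule ccontr)
  assume "l \<noteq> l'"
  have H: "fq_subspace q H"
    using hyp by (simp add: hyperplane_def)
  have "(\<lambda>i. (u i - l * v i) - (u i - l' * v i)) \<in> H"
    using fq_subspace_diff[OF H assms(3,4)] .
  then have "(\<lambda>i. (1 / (l' - l)) * ((u i - l * v i) - (u i - l' * v i))) \<in> H"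
    by (rule fq_subspace_scale[OF H Fq_divide[OF Fq_1 Fq_diff[OF assms(2,1)]]])
  moreover have "(\<lambda>i. (1 / (l' - l)) * ((u i - l * v i) - (u i - l' * v i))) = v"
    using \<open>l \<noteq> l'\<close> by (intro ext) (simp add: field_simps)
  ultimately show False
    using v(2) by simp
qed

lemma hyperplane_coeff:
  assumes "u \<in> U1 q"
  shows "hyperplane_coeff H v u \<in> Fq q" "(\<lambda>i. u i - hyperplane_coeff H v u * v i) \<in> H"
proof -
  have "\<forall>v\<in>U1 q - H. \<forall>u\<in>U1 q. \<exists>h\<in>H. \<exists>l\<in>Fq q. u = (\<lambda>i. h i + l * v i)"
    using hyp unfolding hyperplane_def by blast
  then obtain h l where "h \<in> H" "l \<in> Fq q" "u = (\<lambda>i. h i + l * v i)"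
    using v assms by blast
  then have "\<exists>!l. l \<in> Fq q \<and> (\<lambda>i. u i - l * v i) \<in> H"
    using hyperplane_coeff_unique by (intro ex1I[of _ l]) auto
  then have "hyperplane_coeff H v u \<in> Fq q \<and> (\<lambda>i. u i - hyperplane_coeff H v u * v i) \<in> H"
    unfolding hyperplane_coeff_def by (rule theI')
  then show "hyperplane_coeff H v u \<in> Fq q" "(\<lambda>i. u i - hyperplane_coeff H v u * v i) \<in> H"
    by blast+
qed

lemma hyperplane_coeff_eq:
  assumes "u \<in> U1 q" "l \<in> Fq q" "(\<lambda>i. u i - l * v i) \<in> H"
  shows "hyperplane_coeff H v u = l"
  using hyperplane_coeff_unique[OF hyperplane_coeff(1)[OF assms(1)] assms(2) hyperplane_coeff(2)[OF assms(1)] assms(3)] .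

lemma U1_form_hyperplane_coeff: "U1_form (hyperplane_coeff H v)"
  unfolding U1_form_def
proof (intro conjI ballI)
  have H: "fq_subspace q H"
    using hyp by (simp add: hyperplane_def)
  show "hyperplane_coeff H v u \<in> Fq q" if "u \<in> U1 q" for u
    using hyperplane_coeff(1)[OF that] .
  show "hyperplane_coeff H v (\<lambda>i. u i + w i) = hyperplane_coeff H v u + hyperplane_coeff H v w"
    if "u \<in> U1 q" "w \<in> U1 q" for u w
  proof (rule hyperplane_coeff_eq[OF U1_add[OF that]])
    show "hyperplane_coeff H v u + hyperplane_coeff H v w \<in> Fq q"
      using hyperplane_coeff(1) that by (blast intro: Fq_add)
    have "(\<lambda>i. (u i - hyperplane_coeff H v u * v i) + (w i - hyperplane_coeff H v w * v i)) \<in> H"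
      using fq_subspace_add[OF H hyperplane_coeff(2)[OF that(1)] hyperplane_coeff(2)[OF that(2)]] .
    then show "(\<lambda>i. (u i + w i) - (hyperplane_coeff H v u + hyperplane_coeff H v w) * v i) \<in> H"
      by (simp add: algebra_simps)
  qed
  show "hyperplane_coeff H v (\<lambda>i. l * u i) = l * hyperplane_coeff H v u"
    if "l \<in> Fq q" "u \<in> U1 q" for l u
  proof (rule hyperplane_coeff_eq[OF U1_scale[OF that(2,1)]])
    show "l * hyperplane_coeff H v u \<in> Fq q"
      using hyperplane_coeff(1) that by (blast intro: Fq_mult)
    have "(\<lambda>i. l * (u i - hyperplane_coeff H v u * v i)) \<in> H"
      using fq_subspace_scale[OF H that(1) hyperplane_coeff(2)[OF that(2)]] .
    then show "(\<lambda>i. l * u i - l * hyperplane_coeff H v u * v i) \<in> H"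
      by (simp add: algebra_simps)
  qed
qed

lemma hyperplane_eq_kernel:
  assumes "u \<in> U1 q"
  shows "u \<in> H \<longleftrightarrow> hyperplane_coeff H v u = 0"
proof
  show "u \<in> H \<Longrightarrow> hyperplane_coeff H v u = 0"
    using hyperplane_coeff_eq[OF assms Fq_0] by simp
  show "hyperplane_coeff H v u = 0 \<Longrightarrow> u \<in> H"
    using hyperplane_coeff(2)[OF assms] by simp
qed

lemma hyperplane_coeff_self: "hyperplane_coeff H v v = 1"
  using hyperplane_coeff_eq[OF v(1) Fq_1] hyp by (simp add: hyperplane_def fq_subspace_def)

end

lemma hyperplane_kernel_form:
  assumes "hyperplane q H"
  obtains \<phi> where "U1_form \<phi>" "\<forall>u\<in>U1 q. u \<in> H \<longleftrightarrow> \<phi> u = 0" "\<exists>u\<in>U1 q. \<phi> u \<noteq> 0"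
proof -
  obtain v where v: "v \<in> U1 q" "v \<notin> H"
    using assms by (auto simp: hyperplane_def)
  show ?thesis
  proof (rule that)
    show "U1_form (hyperplane_coeff H v)"
      using U1_form_hyperplane_coeff[OF assms v] .
    show "\<forall>u\<in>U1 q. u \<in> H \<longleftrightarrow> hyperplane_coeff H v u = 0"
      using hyperplane_eq_kernel[OF assms v] by blast
    show "\<exists>u\<in>U1 q. hyperplane_coeff H v u \<noteq> 0"
      using hyperplane_coeff_self[OF assms v] v(1) by (intro bexI[of _ v]) simp_all
  qed
qed

definition b_form :: "((nat \<Rightarrow> 'a) \<Rightarrow> 'a) \<Rightarrow> 'a \<Rightarrow> 'a" where
  "b_form \<phi> b = \<phi> (U1vec q 0 b 0 0)"

definition c_form :: "((nat \<Rightarrow> 'a) \<Rightarrow> 'a) \<Rightarrow> 'a \<Rightarrow> 'a" where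
  "c_form \<phi> c = \<phi> (U1vec q 0 0 c 0)"

lemma Fq_linear_form_b_form:
  assumes \<phi>: "U1_form \<phi>"
  shows "Fq_linear_form (b_form \<phi>)"
  unfolding Fq_linear_form_def b_form_def
proof (intro conjI allI ballI)
  have in_U1: "U1vec q 0 x 0 0 \<in> U1 q" for x :: 'a
    by (rule U1vec_in_U1) simp_all
  show "\<phi> (U1vec q 0 x 0 0) \<in> Fq q" for x
    using U1_form_in_Fq[OF \<phi> in_U1] .
  show "\<phi> (U1vec q 0 (x + y) 0 0) = \<phi> (U1vec q 0 x 0 0) + \<phi> (U1vec q 0 y 0 0)" for x y
    using U1_form_add[OF \<phi> in_U1 in_U1, of x y] by (simp add: U1vec_add)
  show "\<phi> (U1vec q 0 (l * x) 0 0) = l * \<phi> (U1vec q 0 x 0 0)" if "l \<in> Fq q" for l x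
    using U1_form_scale[OF \<phi> that in_U1, of x] by (simp add: U1vec_scale[OF that])
qed

lemma Fq_linear_form_c_form:
  assumes \<phi>: "U1_form \<phi>"
  shows "Fq_linear_form (c_form \<phi>)"
  unfolding Fq_linear_form_def c_form_def
proof (intro conjI allI ballI)
  have in_U1: "U1vec q 0 0 x 0 \<in> U1 q" for x :: 'a
    by (rule U1vec_in_U1) simp_all
  show "\<phi> (U1vec q 0 0 x 0) \<in> Fq q" for x
    using U1_form_in_Fq[OF \<phi> in_U1] .
  show "\<phi> (U1vec q 0 0 (x + y) 0) = \<phi> (U1vec q 0 0 x 0) + \<phi> (U1vec q 0 0 y 0)" for x y
    using U1_form_add[OF \<phi> in_U1 in_U1, of x y] by (simp add: U1vec_add)
  show "\<phi> (U1vec q 0 0 (l * x) 0) = l * \<phi> (U1vec q 0 0 x 0)" if "l \<in> Fq q" for l x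
    using U1_form_scale[OF \<phi> that in_U1, of x] by (simp add: U1vec_scale[OF that])
qed

lemma U1_form_U1vec:
  assumes \<phi>: "U1_form \<phi>" and a: "a \<in> Fq q" and d: "d \<in> Fq q"
  shows "\<phi> (U1vec q a b c d)
    = a * \<phi> (U1vec q 1 0 0 0) + b_form \<phi> b + c_form \<phi> c + d * \<phi> (U1vec q 0 0 0 1)"
proof -
  have "\<phi> (U1vec q a b c d) = \<phi> (U1vec q a 0 0 0) + \<phi> (U1vec q 0 b c d)"
    using U1_form_add[OF \<phi>, of "U1vec q a 0 0 0" "U1vec q 0 b c d"] a d by (simp add: U1vec_in_U1 U1vec_add)
  also have "\<phi> (U1vec q 0 b c d) = b_form \<phi> b + \<phi> (U1vec q 0 0 c d)"
    using U1_form_add[OF \<phi>, of "U1vec q 0 b 0 0" "U1vec q 0 0 c d"] d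
    by (simp add: U1vec_in_U1 U1vec_add b_form_def)
  also have "\<phi> (U1vec q 0 0 c d) = c_form \<phi> c + \<phi> (U1vec q 0 0 0 d)"
    using U1_form_add[OF \<phi>, of "U1vec q 0 0 c 0" "U1vec q 0 0 0 d"] d
    by (simp add: U1vec_in_U1 U1vec_add c_form_def)
  also have "\<phi> (U1vec q a 0 0 0) = a * \<phi> (U1vec q 1 0 0 0)"
    using U1_form_scale[OF \<phi> a, of "U1vec q 1 0 0 0"] by (simp add: U1vec_in_U1 U1vec_scale[OF a])
  also have "\<phi> (U1vec q 0 0 0 d) = d * \<phi> (U1vec q 0 0 0 1)"
    using U1_form_scale[OF \<phi> d, of "U1vec q 0 0 0 1"] by (simp add: U1vec_in_U1 U1vec_scale[OF d])
  finally show ?thesis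
    by (simp add: add_ac)
qed

lemma U1_form_theta_vec_Some:
  assumes "U1_form \<phi>"
  shows "\<phi> (theta_vec (Some t))
    = \<phi> (U1vec q 1 0 0 0) + quad_form (b_form \<phi>) (c_form \<phi>) t + field_norm t * \<phi> (U1vec q 0 0 0 1)"
  unfolding theta_vec_Some U1_form_U1vec[OF assms Fq_1 field_norm_in_Fq] by (simp add: quad_form_def add_ac)

lemma U1_form_eq_0_if_theta_vec_eq_0:
  assumes "3 \<le> q" and \<phi>: "U1_form \<phi>" and vanish: "\<forall>x. \<phi> (theta_vec x) = 0" and "u \<in> U1 q"
  shows "\<phi> u = 0"
proof -
  define B C where "B = b_form \<phi>" and "C = c_form \<phi>"
  have B: "Fq_linear_form B" and C: "Fq_linear_form C"
    unfolding B_def C_def using \<phi> by (simp_all add: Fq_linear_form_b_form Fq_linear_form_c_form)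
  have d: "\<phi> (U1vec q 0 0 0 1) = 0"
    using vanish[rule_format, of None] by (simp add: theta_vec_None)
  have "\<phi> (theta_vec (Some 0)) = \<phi> (U1vec q 1 0 0 0)"
    using U1_form_theta_vec_Some[OF \<phi>, of 0] quad_form_Fq_scale[OF B C Fq_0, of 0]
    by (simp add: d B_def C_def)
  then have a: "\<phi> (U1vec q 1 0 0 0) = 0"
    using vanish by simp
  have "quad_form B C (r * t) = 0" for r t
    using vanish U1_form_theta_vec_Some[OF \<phi>, of "r * t"] a d by (simp add: B_def C_def)
  then have "\<forall>r\<in>Fq q. 0 + r * B t + r^2 * C (t^q * t^(q^2)) = 0" for t
    using quad_form_Fq_scale[OF B C] by simp
  then have B0: "B t = 0" and C_conj: "C (t^q * t^(q^2)) = 0" for t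
    using Fq_quadratic_eq_0[OF \<open>3 \<le> q\<close>] by blast+
  have C0: "C s = 0" for s
  proof (cases "s = 0")
    case False
    then have "(1 / s)^q * (1 / s)^(q^2) = field_norm (1 / s) * s"
      by (simp add: field_norm_def field_simps)
    then have "field_norm (1 / s) * C s = 0"
      using C_conj[of "1 / s"] Fq_linear_form_scale[OF C field_norm_in_Fq] by simp
    with False show ?thesis
      by simp
  qed (simp add: Fq_linear_form_0[OF C])
  obtain a b c d where "u = U1vec q a b c d" "a \<in> Fq q" "d \<in> Fq q"
    using \<open>u \<in> U1 q\<close> unfolding U1_def by blast
  then show ?thesis
    using U1_form_U1vec[OF \<phi>] a d B0 C0 by (simp add: B_def C_def)
qed

lemma card_theta_vec_zeros:
  assumes "3 \<le> q" and \<psi>: "U1_form \<psi>" and vanish: "\<forall>x\<in>PG1q q. \<psi> (theta_vec x) = 0"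
    and nonzero: "\<exists>x. \<psi> (theta_vec x) \<noteq> 0"
  shows "card {x. \<psi> (theta_vec x) = 0} \<in> {q^2 + 1, q^2 + q + 1}"
proof -
  define B C where "B = b_form \<psi>" and "C = c_form \<psi>"
  have B: "Fq_linear_form B" and C: "Fq_linear_form C"
    unfolding B_def C_def using \<psi> by (simp_all add: Fq_linear_form_b_form Fq_linear_form_c_form)
  have d: "\<psi> (U1vec q 0 0 0 1) = 0"
    using vanish[rule_format, of None] by (simp add: theta_vec_None PG1q_def)
  have "\<psi> (U1vec q 1 0 0 0) + r * B 1 + r^2 * C 1 = 0" if "r \<in> Fq q" for r
    using vanish U1_form_theta_vec_Some[OF \<psi>, of r] quad_form_Fq_scale[OF B C that, of 1] that d
    by (simp add: PG1q_def B_def C_def add.assoc)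
  then have a: "\<psi> (U1vec q 1 0 0 0) = 0" and "B 1 = 0" "C 1 = 0"
    using Fq_quadratic_eq_0[OF \<open>3 \<le> q\<close>] by blast+
  then interpret Fq_vanishing_quad_form q field_type B C
    using B C by unfold_locales
  have value_Some: "\<psi> (theta_vec (Some t)) = quad_form B C t" for t
    using U1_form_theta_vec_Some[OF \<psi>] a d by (simp add: B_def C_def)
  have "\<psi> (theta_vec x) = 0 \<longleftrightarrow> x \<in> insert None (Some ` {t. quad_form B C t = 0})" for x
    using theta_vec_None d value_Some by (cases x) auto
  then have "{x. \<psi> (theta_vec x) = 0} = insert None (Some ` {t. quad_form B C t = 0})"
    by blast
  moreover have "\<exists>t. quad_form B C t \<noteq> 0"
    using nonzero theta_vec_None d value_Some by (metis option.exhaust)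
  ultimately show ?thesis
    using card_quad_form_zeros by (simp add: card_image)
qed

lemma theta_subset_iff:
  assumes "fq_subspace q H" and "\<forall>u\<in>U1 q. u \<in> H \<longleftrightarrow> \<phi> u = 0"
  shows "theta q x \<subseteq> H \<longleftrightarrow> \<phi> (theta_vec x) = 0"
proof -
  have "pt q (theta_vec x) \<subseteq> H \<longleftrightarrow> theta_vec x \<in> H"
    using assms(1) unfolding pt_def fq_subspace_def by (force intro: exI[of _ 1])
  then show ?thesis
    using assms(2) theta_vec_in_U1 by (simp add: theta_eq_pt_theta_vec)
qed

lemma U1_form_cube_action_theta_vec_eq_0_iff:
  assumes "U1_form \<phi>" and "al * de - be * ga \<noteq> 0"
  shows "\<phi> (cube_action al be ga de (theta_vec x)) = 0 \<longleftrightarrow> \<phi> (theta_vec (mob al be ga de x)) = 0"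
proof -
  obtain \<mu> where "\<mu> \<noteq> 0"
    "cube_action al be ga de (theta_vec x) = (\<lambda>j. field_norm \<mu> * theta_vec (mob al be ga de x) j)"
    using cube_action_theta_vec[OF assms(2)] by metis
  then show ?thesis
    using U1_form_scale[OF assms(1) field_norm_in_Fq theta_vec_in_U1] by simp
qed

lemma card_O1_subset: "card {P \<in> O1 q. P \<subseteq> H} = card {x. theta q x \<subseteq> (H :: (nat \<Rightarrow> 'a) set)}"
proof -
  have "{P \<in> O1 q. P \<subseteq> H} = theta q ` {x. theta q x \<subseteq> H}"
    by (auto simp: O1_def)
  then show ?thesis
    by (simp add: card_image inj_on_subset[OF inj_theta])
qed

end

theorem mainTheorem6:
  fixes q :: nat and H :: "(nat \<Rightarrow> 'a::{field,finite}) set" and L :: "'a option set"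
  assumes "\<exists>p k. prime p \<and> k > 0 \<and> q = p ^ k"
    and "q \<ge> 4"
    and "card (UNIV :: 'a set) = q ^ 3"
    and "hyperplane q H"
    and "subline q L"
    and "\<forall>P \<in> theta q ` L. P \<subseteq> H"
  shows "card {P \<in> O1 q. P \<subseteq> H} \<in> {q^2 + 1, q^2 + q + 1}"
proof -
  interpret cubic_extension q "TYPE('a)"
    using assms(1,3) by unfold_locales
  obtain \<phi> where \<phi>: "U1_form \<phi>" and kernel: "\<forall>u\<in>U1 q. u \<in> H \<longleftrightarrow> \<phi> u = 0"
    and nonzero: "\<exists>u\<in>U1 q. \<phi> u \<noteq> 0"
    using hyperplane_kernel_form[OF assms(4)] by blast
  have H: "fq_subspace q H"
    using assms(4) by (simp add: hyperplane_def)
  obtain al be ga de :: 'a where det: "al * de - be * ga \<noteq> 0" and L: "L = mob al be ga de ` PG1q q"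
    using assms(5) by (auto simp: subline_def)
  define \<psi> where "\<psi> u = \<phi> (cube_action al be ga de u)" for u
  have \<psi>_zero_iff: "\<psi> (theta_vec x) = 0 \<longleftrightarrow> theta q (mob al be ga de x) \<subseteq> H" for x
    unfolding \<psi>_def U1_form_cube_action_theta_vec_eq_0_iff[OF \<phi> det] theta_subset_iff[OF H kernel] ..
  have \<psi>: "U1_form \<psi>"
    unfolding \<psi>_def using \<phi> by (rule U1_form_comp_cube_action)
  have vanish: "\<forall>x\<in>PG1q q. \<psi> (theta_vec x) = 0"
    using assms(6) \<psi>_zero_iff by (simp add: L)
  have nonvanishing: "\<exists>x. \<psi> (theta_vec x) \<noteq> 0"
  proof (rule ccontr)
    assume "\<not> (\<exists>x. \<psi> (theta_vec x) \<noteq> 0)"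
    then have "\<forall>y. \<phi> (theta_vec y) = 0"
      using \<psi>_zero_iff theta_subset_iff[OF H kernel] surj_mob[OF det] by (metis surjD)
    then show False
      using U1_form_eq_0_if_theta_vec_eq_0[OF _ \<phi>] assms(2) nonzero by fastforce
  qed
  have "card {P \<in> O1 q. P \<subseteq> H} = card {y. theta q y \<subseteq> H}"
    by (rule card_O1_subset)
  also have "\<dots> = card {x. \<psi> (theta_vec x) = 0}"
    using card_mob_preimage[OF det, of "\<lambda>y. theta q y \<subseteq> H"] by (simp add: \<psi>_zero_iff)
  finally show ?thesis
    using card_theta_vec_zeros[OF _ \<psi> vanish nonvanishing] assms(2) by simp
qed

end
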